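(* Let $X$ be a nonempty set and $\rho:X\times X\to[0,\infty)$ a function with $\rho(x,y)=0$ iff $x=y$ and $\rho(x,y)=\rho(y,x)$ for all $x,y$. Suppose that the topological space $(X,\mathcal T(\rho))$ is Hausdorff and compact, that $\rho$ is coherent, and that $T:X\to X$ satisfies $\rho(Tx,Ty)\le\lambda\rho(x,y)$ for some $\lambda\in[0,1)$ and all $x,y\in X$. Then $T$ has a unique fixed point.
   Context: $\mathcal T(\rho)$ is the topology on $X$ in which $U\subseteq X$ is open iff for every $x\in U$ there is $r>0$ with $B(x,r,\rho)=\{y\in X:\rho(x,y)<r\}\subseteq U$. The function $\rho$ is coherent if for all $a\in X$ and sequences $\{a_n\},\{b_n\}$ in $X$: $\lim_n\rho(a,a_n)=0$ and $\lim_n\rho(a_n,b_n)=0$ imply $\lim_n\rho(a,b_n)=0$. *)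

theory Defs
  imports "HOL-Analysis.Analysis"
begin

definition rball :: "'a set \<Rightarrow> ('a \<Rightarrow> 'a \<Rightarrow> real) \<Rightarrow> 'a \<Rightarrow> real \<Rightarrow> 'a set" where
  "rball X \<rho> x r = {y \<in> X. \<rho> x y < r}"

definition rho_open :: "'a set \<Rightarrow> ('a \<Rightarrow> 'a \<Rightarrow> real) \<Rightarrow> 'a set \<Rightarrow> bool" where
  "rho_open X \<rho> U \<longleftrightarrow> U \<subseteq> X \<and> (\<forall>x\<in>U. \<exists>r>0. rball X \<rho> x r \<subseteq> U)"

definition rho_topology :: "'a set \<Rightarrow> ('a \<Rightarrow> 'a \<Rightarrow> real) \<Rightarrow> 'a topology" where
  "rho_topology X \<rho> = topology (rho_open X \<rho>)"

definition coherent :: "'a set \<Rightarrow> ('a \<Rightarrow> 'a \<Rightarrow> real) \<Rightarrow> bool" where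
  "coherent X \<rho> \<longleftrightarrow> (\<forall>a\<in>X. \<forall>an bn. (\<forall>n. an n \<in> X) \<longrightarrow> (\<forall>n. bn n \<in> X) \<longrightarrow>
      (\<lambda>n. \<rho> a (an n)) \<longlonglongrightarrow> 0 \<longrightarrow> (\<lambda>n. \<rho> (an n) (bn n)) \<longlonglongrightarrow> 0 \<longrightarrow>
      (\<lambda>n. \<rho> a (bn n)) \<longlonglongrightarrow> 0)"

end

theory Submission
  imports Defs
begin

text \<open>
  Although \<open>\<rho>\<close>-balls need not be open in \<open>\<T>(\<rho>)\<close>, compactness still gives every sequence
  \<open>y\<close> a point \<open>z\<close> with \<open>\<rho>(z, y n)\<close> frequently arbitrarily small: otherwise every point keeps
  a positive \<open>\<rho>\<close>-distance from some tail of \<open>y\<close>, so all tails are closed, and their empty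
  intersection contradicts the finite intersection property.
  Apply this to a Picard orbit \<open>x n = T\<^sup>n x\<^sub>0\<close> and a subsequence \<open>x (m k)\<close> approaching \<open>z\<close>.
  Since \<open>\<rho>(x n, x (n+1)) \<le> \<lambda>\<^sup>n \<rho>(x\<^sub>0, T x\<^sub>0)\<close>, coherence shows that \<open>T (x (m k))\<close> approaches \<open>z\<close>
  too; by contractivity it also approaches \<open>T z\<close>, and coherence once more yields \<open>\<rho>(z, T z) = 0\<close>.
  Uniqueness follows from \<open>\<lambda> < 1\<close>.
\<close>

lemma istopology_rho_open: "istopology (rho_open X \<rho>)"
  unfolding istopology_def
proof (intro conjI allI impI)
  fix S T assume S: "rho_open X \<rho> S" and T: "rho_open X \<rho> T"
  show "rho_open X \<rho> (S \<inter> T)"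
    unfolding rho_open_def
  proof (intro conjI ballI)
    show "S \<inter> T \<subseteq> X" using S unfolding rho_open_def by blast
    fix x assume x: "x \<in> S \<inter> T"
    obtain r1 where "r1 > 0" "rball X \<rho> x r1 \<subseteq> S" using S x unfolding rho_open_def by blast
    moreover obtain r2 where "r2 > 0" "rball X \<rho> x r2 \<subseteq> T" using T x unfolding rho_open_def by blast
    ultimately have "min r1 r2 > 0" "rball X \<rho> x (min r1 r2) \<subseteq> S \<inter> T"
      unfolding rball_def by auto
    then show "\<exists>r>0. rball X \<rho> x r \<subseteq> S \<inter> T" by blast
  qed
next
  fix K assume "\<forall>k\<in>K. rho_open X \<rho> k"
  then show "rho_open X \<rho> (\<Union>K)"
    unfolding rho_open_def by (meson UnionE Union_least Union_upper order_trans)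
qed

lemma openin_rho_topology: "openin (rho_topology X \<rho>) = rho_open X \<rho>"
  unfolding rho_topology_def by (rule topology_inverse'[OF istopology_rho_open])

lemma topspace_rho_topology: "topspace (rho_topology X \<rho>) = X"
proof -
  have "rho_open X \<rho> X" unfolding rho_open_def rball_def by (auto intro: exI[of _ 1])
  then show ?thesis unfolding topspace_def openin_rho_topology rho_open_def by blast
qed

lemma closedin_rho_topology:
  "closedin (rho_topology X \<rho>) S \<longleftrightarrow> S \<subseteq> X \<and> (\<forall>x\<in>X - S. \<exists>r>0. rball X \<rho> x r \<inter> S = {})"
  unfolding closedin_def topspace_rho_topology openin_rho_topology rho_open_def rball_def by blast

lemma positive_eventually_bounded_below:
  fixes f :: "nat \<Rightarrow> real"
  assumes pos: "\<And>n. N \<le> n \<Longrightarrow> 0 < f n" and "0 < e"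
    and ev: "eventually (\<lambda>n. e \<le> f n) sequentially"
  obtains r where "0 < r" "\<And>n. N \<le> n \<Longrightarrow> r \<le> f n"
proof -
  obtain M where M: "\<And>n. M \<le> n \<Longrightarrow> e \<le> f n" using ev unfolding eventually_sequentially by blast
  define r where "r = Min (insert e (f ` {N..<M}))"
  have "0 < r" unfolding r_def using \<open>0 < e\<close> pos by (subst Min_gr_iff) auto
  moreover have "r \<le> f n" if "N \<le> n" for n
  proof (cases "M \<le> n")
    case True
    then show ?thesis using M[of n] unfolding r_def by (meson Min_le finite_imageI finite_atLeastLessThan
          finite_insert insertI1 order_trans)
  next
    case False
    then show ?thesis unfolding r_def using that by (intro Min_le) auto
  qed
  ultimately show ?thesis using that by blast
qed

lemma closedin_rho_topology_tail:
  assumes pos: "\<forall>x\<in>X. \<forall>y\<in>X. \<rho> x y \<ge> 0"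
    and zero: "\<forall>x\<in>X. \<forall>y\<in>X. \<rho> x y = 0 \<longleftrightarrow> x = y"
    and y: "\<And>n. y n \<in> X"
    and far: "\<And>x. x \<in> X \<Longrightarrow> \<exists>e>0. eventually (\<lambda>n. e \<le> \<rho> x (y n)) sequentially"
  shows "closedin (rho_topology X \<rho>) (y ` {N..})"
  unfolding closedin_rho_topology
proof (intro conjI ballI)
  show "y ` {N..} \<subseteq> X" using y by auto
  fix x assume x: "x \<in> X - y ` {N..}"
  have x_off_tail: "0 < \<rho> x (y n)" if "N \<le> n" for n
    using pos zero x y that by (metis DiffE atLeast_iff image_eqI order_le_less)
  obtain e where e: "0 < e" "eventually (\<lambda>n. e \<le> \<rho> x (y n)) sequentially"
    using far x by blast
  obtain r where "0 < r" and r: "\<And>n. N \<le> n \<Longrightarrow> r \<le> \<rho> x (y n)"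
    using positive_eventually_bounded_below[of N "\<lambda>n. \<rho> x (y n)", OF x_off_tail e] by blast
  have "\<not> \<rho> x (y n) < r" if "N \<le> n" for n using r[OF that] by simp
  then have "rball X \<rho> x r \<inter> y ` {N..} = {}" unfolding rball_def by auto
  then show "\<exists>r>0. rball X \<rho> x r \<inter> y ` {N..} = {}" using \<open>0 < r\<close> by blast
qed

lemma compact_rho_topology_cluster_point:
  assumes compact: "compact_space (rho_topology X \<rho>)"
    and pos: "\<forall>x\<in>X. \<forall>y\<in>X. \<rho> x y \<ge> 0"
    and zero: "\<forall>x\<in>X. \<forall>y\<in>X. \<rho> x y = 0 \<longleftrightarrow> x = y"
    and y: "\<And>n. y n \<in> X"
  obtains z where "z \<in> X" "\<And>e. 0 < e \<Longrightarrow> frequently (\<lambda>n. \<rho> z (y n) < e) sequentially"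
proof -
  have "\<exists>z\<in>X. \<forall>e>0. frequently (\<lambda>n. \<rho> z (y n) < e) sequentially"
  proof (rule ccontr)
    assume "\<not> ?thesis"
    then have far: "\<exists>e>0. eventually (\<lambda>n. e \<le> \<rho> x (y n)) sequentially" if "x \<in> X" for x
      using that by (auto simp: not_frequently not_less)
    define tail where "tail N = y ` {N..}" for N
    have "\<forall>C\<in>range tail. closedin (rho_topology X \<rho>) C"
      using closedin_rho_topology_tail[OF pos zero y far] unfolding tail_def by blast
    moreover have "\<Inter>\<G> \<noteq> {}" if fin: "finite \<G>" and sub: "\<G> \<subseteq> range tail" for \<G>
    proof -
      obtain I where "finite I" "\<G> = tail ` I" using finite_subset_image[OF fin sub] by blast
      then have "y (Max (insert 0 I)) \<in> \<Inter>\<G>" unfolding tail_def by auto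
      then show ?thesis by blast
    qed
    moreover have "(\<forall>C\<in>range tail. closedin (rho_topology X \<rho>) C) \<and>
        (\<forall>\<G>. finite \<G> \<and> \<G> \<subseteq> range tail \<longrightarrow> \<Inter>\<G> \<noteq> {}) \<longrightarrow> \<Inter>(range tail) \<noteq> {}"
      using compact unfolding compact_space_fip by (rule spec)
    ultimately have "\<Inter>(range tail) \<noteq> {}" by blast
    then obtain w where w: "\<And>N. w \<in> tail N" by blast
    then have "w \<in> X" using y unfolding tail_def by blast
    then obtain e M where "0 < e" "\<And>n. M \<le> n \<Longrightarrow> e \<le> \<rho> w (y n)"
      using far unfolding eventually_sequentially by blast
    moreover obtain n where "M \<le> n" "w = y n" using w[of M] unfolding tail_def by blast
    ultimately show False using zero \<open>w \<in> X\<close> by force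
  qed
  then show ?thesis using that by blast
qed

lemma frequently_small_imp_tendsto_zero_along:
  fixes f :: "nat \<Rightarrow> real"
  assumes nonneg: "\<And>n. 0 \<le> f n"
    and small: "\<And>e. 0 < e \<Longrightarrow> frequently (\<lambda>n. f n < e) sequentially"
  obtains m where "filterlim m sequentially sequentially" "(\<lambda>k. f (m k)) \<longlonglongrightarrow> 0"
proof -
  have "\<forall>k. \<exists>n\<ge>k. f n < inverse (real (Suc k))"
    using small[of "inverse (real (Suc _))"] by (simp add: frequently_sequentially)
  then obtain m where m: "\<And>k. k \<le> m k" "\<And>k. f (m k) < inverse (real (Suc k))" by metis
  have "filterlim m sequentially sequentially"
    using m(1) by (intro filterlim_at_top_mono[OF filterlim_ident]) auto
  moreover have "(\<lambda>k. f (m k)) \<longlonglongrightarrow> 0"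
    using nonneg m(2) by (intro tendsto_sandwich[OF _ _ tendsto_const LIMSEQ_inverse_real_of_nat])
      (auto intro!: always_eventually less_imp_le)
  ultimately show ?thesis using that by blast
qed

lemma funpow_mem: "T ` X \<subseteq> X \<Longrightarrow> x \<in> X \<Longrightarrow> (T ^^ n) x \<in> X"
  by (induction n) auto

lemma contraction_fixed_point_unique:
  fixes \<rho> :: "'a \<Rightarrow> 'a \<Rightarrow> real" and lam :: real
  assumes pos: "\<forall>x\<in>X. \<forall>y\<in>X. \<rho> x y \<ge> 0"
    and zero: "\<forall>x\<in>X. \<forall>y\<in>X. \<rho> x y = 0 \<longleftrightarrow> x = y"
    and "lam < 1" and contr: "\<forall>x\<in>X. \<forall>y\<in>X. \<rho> (T x) (T y) \<le> lam * \<rho> x y"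
    and "x \<in> X" "y \<in> X" "T x = x" "T y = y"
  shows "x = y"
proof -
  have "\<rho> x y \<le> lam * \<rho> x y" using contr assms(5-8) by metis
  moreover have "0 \<le> \<rho> x y" using pos assms(5,6) by blast
  ultimately have "\<rho> x y = 0" using \<open>lam < 1\<close> by (smt (verit) mult_le_cancel_right1)
  then show ?thesis using zero assms(5,6) by blast
qed

lemma contraction_orbit_step_tendsto_zero:
  fixes \<rho> :: "'a \<Rightarrow> 'a \<Rightarrow> real" and lam :: real
  assumes pos: "\<forall>x\<in>X. \<forall>y\<in>X. \<rho> x y \<ge> 0"
    and into: "T ` X \<subseteq> X" and "0 \<le> lam" "lam < 1"
    and contr: "\<forall>x\<in>X. \<forall>y\<in>X. \<rho> (T x) (T y) \<le> lam * \<rho> x y"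
    and "x \<in> X"
  shows "(\<lambda>n. \<rho> ((T ^^ n) x) (T ((T ^^ n) x))) \<longlonglongrightarrow> 0"
proof -
  have orbit: "(T ^^ n) x \<in> X" for n using into \<open>x \<in> X\<close> by (rule funpow_mem)
  have orbit_T: "T ((T ^^ n) x) \<in> X" for n using into orbit by blast
  have bound: "\<rho> ((T ^^ n) x) (T ((T ^^ n) x)) \<le> lam ^ n * \<rho> x (T x)" for n
  proof (induction n)
    case (Suc n)
    have "\<rho> (T ((T ^^ n) x)) (T (T ((T ^^ n) x))) \<le> lam * \<rho> ((T ^^ n) x) (T ((T ^^ n) x))"
      using contr orbit[of n] orbit_T[of n] by blast
    also have "\<dots> \<le> lam * (lam ^ n * \<rho> x (T x))" using Suc \<open>0 \<le> lam\<close> by (rule mult_left_mono)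
    finally show ?case by simp
  qed simp
  have "0 \<le> \<rho> ((T ^^ n) x) (T ((T ^^ n) x))" for n using pos orbit[of n] orbit_T[of n] by blast
  then have "eventually (\<lambda>n. 0 \<le> \<rho> ((T ^^ n) x) (T ((T ^^ n) x))) sequentially"
    by (intro always_eventually allI)
  moreover have "eventually (\<lambda>n. \<rho> ((T ^^ n) x) (T ((T ^^ n) x)) \<le> lam ^ n * \<rho> x (T x)) sequentially"
    using bound by (intro always_eventually allI)
  moreover have "(\<lambda>n. lam ^ n * \<rho> x (T x)) \<longlonglongrightarrow> 0"
    using assms(3,4) by (intro tendsto_mult_left_zero LIMSEQ_power_zero) auto
  ultimately show ?thesis by (rule tendsto_sandwich[OF _ _ tendsto_const])
qed

lemma coherent_limit_fixed_point:
  fixes \<rho> :: "'a \<Rightarrow> 'a \<Rightarrow> real" and lam :: real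
  assumes coh: "coherent X \<rho>"
    and pos: "\<forall>x\<in>X. \<forall>y\<in>X. \<rho> x y \<ge> 0"
    and zero: "\<forall>x\<in>X. \<forall>y\<in>X. \<rho> x y = 0 \<longleftrightarrow> x = y"
    and sym: "\<forall>x\<in>X. \<forall>y\<in>X. \<rho> x y = \<rho> y x"
    and into: "T ` X \<subseteq> X"
    and contr: "\<forall>x\<in>X. \<forall>y\<in>X. \<rho> (T x) (T y) \<le> lam * \<rho> x y"
    and "z \<in> X" and a: "\<And>k. a k \<in> X"
    and near: "(\<lambda>k. \<rho> z (a k)) \<longlonglongrightarrow> 0"
    and step: "(\<lambda>k. \<rho> (a k) (T (a k))) \<longlonglongrightarrow> 0"
  shows "T z = z"
proof -
  note coherence = coh[unfolded coherent_def, rule_format, OF \<open>z \<in> X\<close>]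
  have Ta: "T (a k) \<in> X" for k using a into by blast
  have Tz: "T z \<in> X" using \<open>z \<in> X\<close> into by blast
  have "(\<lambda>k. \<rho> z (T (a k))) \<longlonglongrightarrow> 0" using coherence[OF a Ta near step] .
  moreover have "(\<lambda>k. \<rho> (T (a k)) (T z)) \<longlonglongrightarrow> 0"
  proof (rule tendsto_sandwich[OF _ _ tendsto_const tendsto_mult_right_zero[OF near]])
    have "\<rho> (T (a k)) (T z) \<le> lam * \<rho> z (a k)" for k
    proof -
      have "\<rho> (T (a k)) (T z) = \<rho> (T z) (T (a k))" using sym Ta Tz by blast
      also have "\<dots> \<le> lam * \<rho> z (a k)" using contr \<open>z \<in> X\<close> a by blast
      finally show ?thesis .
    qed
    then show "eventually (\<lambda>k. \<rho> (T (a k)) (T z) \<le> lam * \<rho> z (a k)) sequentially"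
      by (intro always_eventually allI)
    show "eventually (\<lambda>k. 0 \<le> \<rho> (T (a k)) (T z)) sequentially"
      using pos Ta Tz by (intro always_eventually allI) blast
  qed
  ultimately have "(\<lambda>k. \<rho> z (T z)) \<longlonglongrightarrow> 0"
    by (rule coherence[of "\<lambda>k. T (a k)" "\<lambda>_. T z", OF Ta Tz])
  then show "T z = z" using zero \<open>z \<in> X\<close> Tz by (simp add: LIMSEQ_const_iff)
qed

theorem mainTheorem3:
  fixes X :: "'a set" and \<rho> :: "'a \<Rightarrow> 'a \<Rightarrow> real" and T :: "'a \<Rightarrow> 'a" and lam :: real
  assumes "X \<noteq> {}"
    and "\<forall>x\<in>X. \<forall>y\<in>X. \<rho> x y \<ge> 0"
    and "\<forall>x\<in>X. \<forall>y\<in>X. \<rho> x y = 0 \<longleftrightarrow> x = y"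
    and "\<forall>x\<in>X. \<forall>y\<in>X. \<rho> x y = \<rho> y x"
    and "Hausdorff_space (rho_topology X \<rho>)"
    and "compact_space (rho_topology X \<rho>)"
    and "coherent X \<rho>"
    and "T ` X \<subseteq> X"
    and "0 \<le> lam" and "lam < 1"
    and "\<forall>x\<in>X. \<forall>y\<in>X. \<rho> (T x) (T y) \<le> lam * \<rho> x y"
  shows "\<exists>!x. x \<in> X \<and> T x = x"
proof -
  obtain x0 where "x0 \<in> X" using assms(1) by blast
  define orbit where "orbit n = (T ^^ n) x0" for n
  have orbit: "orbit n \<in> X" for n
    unfolding orbit_def using assms(8) \<open>x0 \<in> X\<close> by (rule funpow_mem)
  obtain z where "z \<in> X" and z: "\<And>e. 0 < e \<Longrightarrow> frequently (\<lambda>n. \<rho> z (orbit n) < e) sequentially"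
    using compact_rho_topology_cluster_point[of X \<rho> orbit, OF assms(6,2,3) orbit] by blast
  have nonneg: "0 \<le> \<rho> z (orbit n)" for n using assms(2) \<open>z \<in> X\<close> orbit by blast
  obtain m where m: "filterlim m sequentially sequentially"
    and near: "(\<lambda>k. \<rho> z (orbit (m k))) \<longlonglongrightarrow> 0"
    using frequently_small_imp_tendsto_zero_along[of "\<lambda>n. \<rho> z (orbit n)", OF nonneg z] by blast
  have "(\<lambda>n. \<rho> (orbit n) (T (orbit n))) \<longlonglongrightarrow> 0"
    unfolding orbit_def by (rule contraction_orbit_step_tendsto_zero[OF assms(2,8-11) \<open>x0 \<in> X\<close>])
  then have "(\<lambda>k. \<rho> (orbit (m k)) (T (orbit (m k)))) \<longlonglongrightarrow> 0"
    using m by (rule filterlim_compose)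
  then have "T z = z"
    by (rule coherent_limit_fixed_point[OF assms(7,2,3,4,8,11) \<open>z \<in> X\<close> orbit near])
  then show ?thesis
    using contraction_fixed_point_unique[OF assms(2,3,10,11)] \<open>z \<in> X\<close> by blast
qed

end
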